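(* In the setting of the context, let $\mu^*\in W_1$ and $U=B_1(\mu^* )$. Then for every $n\ge1$ the family $\{\mathscr{C}^{(n)}_\mu\}_{\mu\in U}$ is stable at $\mu^*$, i.e. there is $\delta>0$ such that (i) $\mathcal{I}_n(f_\mu)=\mathcal{I}_n(f_{\mu^*})$ for every $\mu\in U\cap B_\delta(\mu^* )$, and (ii) $d_H(A^\alpha_\mu,A^\alpha_{\mu^*})\to0$ as $\mu\to\mu^*$ for every $\alpha\in\mathcal{I}_n(f_{\mu^*})$.
   Context: $X\subset\mathbb{R}^d$ is a compact convex polytope (possibly not full-dimensional) with relative interior $\mathrm{relint}(X)$. $\ell\ge1$, $\mathcal{A}=\{-1,1\}^\ell$, $\varphi_i(x)=\Lambda_ix+b_i$ ($i\in\mathcal{A}$) with $\Lambda_i\in GL_d(\mathbb{R})$, $\|\Lambda_i\|<1$ in some operator norm, and $\varphi_i(X)\subset\mathrm{relint}(X)$. $v^{(1)},\dots,v^{(\ell)}$ are unit vectors in $\mathbb{R}^d$. Label map: $\sigma_\mu(x)=(s_1(x),\dots,s_\ell(x))$, $s_j(x)=-1$ if $\langle v^{(j)},x\rangle\le\mu_j$ and $1$ otherwise; $f_\mu(x)=\varphi_{\sigma_\mu(x)}(x)$ on $X$. $A_{i,\mu}=\mathrm{relint}(X)\cap\mathrm{relint}(\{x\in X:\sigma_\mu(x)=i\})$. For $\alpha=(i_0,\dots,i_{n-1})$: $A^\alpha_\mu=A_{i_0,\mu}\cap\varphi_{i_0}^{-1}(A_{i_1,\mu})\cap\cdots\cap(\varphi_{i_{n-2}}\circ\cdots\circ\varphi_{i_0})^{-1}(A_{i_{n-1},\mu})$.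 $\mathcal{I}_n(f_\mu)=\{\alpha\in\mathcal{A}^n:A^\alpha_\mu\ne\emptyset\}$. $\mathscr{C}^{(1)}_\mu=\{A_{i,\mu}\}_{i\in\mathcal{A}}$ and for $n\ge2$, $\mathscr{C}^{(n)}_\mu=\{A^\alpha_\mu:\alpha\in\mathcal{I}_n(f_\mu)\}$. $Z_\alpha=\{\mu:A^\alpha_\mu\ne\emptyset\}$ and $W_1=\mathbb{R}^\ell\setminus\bigcup_{n\ge1}\bigcup_{\alpha\in\mathcal{A}^n}\partial Z_\alpha$. $d_H$ is the Hausdorff distance. *)

theory Defs
  imports "HOL-Analysis.Analysis"
begin

definition labels :: "('l::finite \<Rightarrow> int) set" where
  "labels = {i. \<forall>j. i j \<in> {-1, 1}}"

definition is_norm :: "('a::real_vector \<Rightarrow> real) \<Rightarrow> bool" where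
  "is_norm N \<longleftrightarrow> (\<forall>x. N x = 0 \<longleftrightarrow> x = 0) \<and> (\<forall>c x. N (c *\<^sub>R x) = \<bar>c\<bar> * N x)
     \<and> (\<forall>x y. N (x + y) \<le> N x + N y)"

definition op_norm_wrt :: "('a::real_vector \<Rightarrow> real) \<Rightarrow> ('a \<Rightarrow> 'a) \<Rightarrow> real" where
  "op_norm_wrt N L = (SUP x\<in>{x. N x = 1}. N (L x))"

definition sigma :: "('l::finite \<Rightarrow> 'a::euclidean_space) \<Rightarrow> real^'l \<Rightarrow> 'a \<Rightarrow> ('l \<Rightarrow> int)" where
  "sigma v \<mu> x = (\<lambda>j. if v j \<bullet> x \<le> \<mu> $ j then -1 else 1)"

definition fmap :: "(('l::finite \<Rightarrow> int) \<Rightarrow> 'a \<Rightarrow> 'a) \<Rightarrow> ('l \<Rightarrow> 'a::euclidean_space) \<Rightarrow> real^'l \<Rightarrow> 'a \<Rightarrow> 'a" where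
  "fmap \<phi> v \<mu> x = \<phi> (sigma v \<mu> x) x"

definition Aset :: "'a set \<Rightarrow> ('l::finite \<Rightarrow> 'a::euclidean_space) \<Rightarrow> real^'l \<Rightarrow> ('l \<Rightarrow> int) \<Rightarrow> 'a set" where
  "Aset X v \<mu> i = rel_interior X \<inter> rel_interior {x\<in>X. sigma v \<mu> x = i}"

text \<open>A^alpha_mu for a word alpha = [i0,...,i_{n-1}]:
  A^{i0 # beta} = A_{i0} \<inter> phi_{i0}^{-1}(A^beta), with A^[] = UNIV (only used for n \<ge> 1).\<close>
fun cyl :: "'a set \<Rightarrow> (('l::finite \<Rightarrow> int) \<Rightarrow> 'a \<Rightarrow> 'a) \<Rightarrow> ('l \<Rightarrow> 'a::euclidean_space) \<Rightarrow> real^'l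
             \<Rightarrow> ('l \<Rightarrow> int) list \<Rightarrow> 'a set" where
  "cyl X \<phi> v \<mu> [] = UNIV"
| "cyl X \<phi> v \<mu> (i # \<alpha>) = Aset X v \<mu> i \<inter> (\<phi> i -` cyl X \<phi> v \<mu> \<alpha>)"

definition admissible :: "'a set \<Rightarrow> (('l::finite \<Rightarrow> int) \<Rightarrow> 'a \<Rightarrow> 'a) \<Rightarrow> ('l \<Rightarrow> 'a::euclidean_space) \<Rightarrow> real^'l
             \<Rightarrow> nat \<Rightarrow> ('l \<Rightarrow> int) list set" where
  "admissible X \<phi> v \<mu> n = {\<alpha>. length \<alpha> = n \<and> set \<alpha> \<subseteq> labels \<and> cyl X \<phi> v \<mu> \<alpha> \<noteq> {}}"

definition Zset :: "'a set \<Rightarrow> (('l::finite \<Rightarrow> int) \<Rightarrow> 'a \<Rightarrow> 'a) \<Rightarrow> ('l \<Rightarrow> 'a::euclidean_space)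
             \<Rightarrow> ('l \<Rightarrow> int) list \<Rightarrow> (real^'l) set" where
  "Zset X \<phi> v \<alpha> = {\<mu>. cyl X \<phi> v \<mu> \<alpha> \<noteq> {}}"

definition W1 :: "'a set \<Rightarrow> (('l::finite \<Rightarrow> int) \<Rightarrow> 'a \<Rightarrow> 'a) \<Rightarrow> ('l \<Rightarrow> 'a::euclidean_space) \<Rightarrow> (real^'l) set" where
  "W1 X \<phi> v = UNIV - (\<Union>n\<in>{1..}. \<Union>\<alpha>\<in>{\<alpha>. length \<alpha> = n \<and> set \<alpha> \<subseteq> labels}. frontier (Zset X \<phi> v \<alpha>))"

text \<open>Hausdorff distance (meaningful for nonempty bounded sets).\<close>
definition hausdorff_dist :: "'a::metric_space set \<Rightarrow> 'a set \<Rightarrow> real" where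
  "hausdorff_dist S T = max (SUP x\<in>S. infdist x T) (SUP y\<in>T. infdist y S)"

end

theory Submission
  imports Defs
begin

text \<open>By \<open>\<mu>\<^sup>* \<in> W\<^sub>1\<close>, \<open>\<mu>\<^sup>*\<close> lies in the interior or in the exterior of each of the finitely many
  sets \<open>Z\<^sub>\<alpha>\<close> with \<open>|\<alpha>| = n\<close>, so the admissible words do not change near \<open>\<mu>\<^sup>*\<close>.
  For an admissible \<open>\<alpha>\<close> the cells \<open>A\<^sub>i\<^sub>,\<^sub>\<mu>\<close> of its letters are nonempty for all \<open>\<mu>\<close> near \<open>\<mu>\<^sup>*\<close>; this
  forces \<open>A\<^sub>i\<^sub>,\<^sub>\<mu>\<close> to be \<open>relint X\<close> cut by the open half-spaces describing \<open>\<sigma>\<^sub>\<mu> = i\<close>, so the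
  graph \<open>{(\<mu>, x). x \<in> A\<^sub>i\<^sub>,\<^sub>\<mu>}\<close> is convex. Pulling back along the affine maps
  \<open>(\<mu>, x) \<mapsto> (\<mu>, \<phi>\<^sub>i x)\<close> keeps convexity, so the graph of \<open>\<mu> \<mapsto> A\<^sup>\<alpha>\<^sub>\<mu>\<close> is convex near \<open>\<mu>\<^sup>*\<close>.
  A set-valued map with convex graph and nonempty values in a bounded set is Lipschitz for the
  Hausdorff distance near the centre of the ball.\<close>

lemma rel_interior_Int_open_subset:
  fixes S X :: "'a::euclidean_space set"
  assumes U: "open U" and XU: "X \<inter> U \<subseteq> S" and SX: "S \<subseteq> X"
  shows "rel_interior X \<inter> U \<subseteq> rel_interior S"
proof
  fix x assume x: "x \<in> rel_interior X \<inter> U"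
  then have "x \<in> rel_interior X" by blast
  then obtain T where T: "open T" "x \<in> T \<inter> X" "T \<inter> affine hull X \<subseteq> X"
    unfolding mem_rel_interior by blast
  have "affine hull S \<subseteq> affine hull X" using SX by (rule hull_mono)
  with T(3) XU have "(T \<inter> U) \<inter> affine hull S \<subseteq> S" by blast
  moreover have "x \<in> (T \<inter> U) \<inter> S" using T(2) x XU by blast
  moreover have "open (T \<inter> U)" using T(1) U by (rule open_Int)
  ultimately show "x \<in> rel_interior S" unfolding mem_rel_interior by (intro exI[of _ "T \<inter> U"] conjI)
qed

text \<open>Extrapolating from \<open>y\<close> slightly beyond \<open>x\<close> stays in \<open>S\<close>, and would exceed \<open>c\<close> if \<open>u \<bullet> x = c\<close>.\<close>
lemma rel_interior_inner_less:
  fixes S :: "'a::euclidean_space set"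
  assumes x: "x \<in> rel_interior S" and le: "\<forall>z\<in>S. u \<bullet> z \<le> c" and y: "y \<in> S" "u \<bullet> y < c"
  shows "u \<bullet> x < c"
proof (rule ccontr)
  assume "\<not> u \<bullet> x < c"
  obtain e where e: "e > 0" "ball x e \<inter> affine hull S \<subseteq> S"
    using x mem_rel_interior_ball by blast
  have "x \<noteq> y" using y(2) \<open>\<not> u \<bullet> x < c\<close> by auto
  define t where "t = e / (2 * norm (x - y))"
  have t: "t > 0" "t * norm (x - y) < e"
    using e(1) \<open>x \<noteq> y\<close> by (auto simp: t_def)
  define z where "z = (1 + t) *\<^sub>R x + (- t) *\<^sub>R y"
  have "x \<in> S" using x rel_interior_subset by blast
  then have "z \<in> affine hull S"
    unfolding z_def by (intro mem_affine[OF affine_affine_hull] hull_inc y(1)) auto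
  moreover have "dist x z = t * norm (x - y)"
    using t(1) by (simp add: z_def dist_norm algebra_simps flip: scaleR_diff_right)
  ultimately have "z \<in> S" using e t by auto
  moreover have "u \<bullet> z = u \<bullet> x + t * (u \<bullet> x - u \<bullet> y)"
    by (simp add: z_def inner_add_right algebra_simps)
  moreover have "t * (u \<bullet> x - u \<bullet> y) > 0"
    using t(1) y(2) \<open>\<not> u \<bullet> x < c\<close> by simp
  ultimately show False using le \<open>\<not> u \<bullet> x < c\<close> by fastforce
qed

lemma eventually_mem_iff_notin_frontier:
  assumes "x \<notin> frontier S"
  shows "eventually (\<lambda>y. y \<in> S \<longleftrightarrow> x \<in> S) (nhds x)"
proof -
  from assms have "x \<in> interior S \<or> x \<in> interior (- S)" by (simp add: frontier_interiors)
  then show ?thesis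
  proof
    assume x: "x \<in> interior S"
    have "eventually (\<lambda>y. y \<in> interior S) (nhds x)"
      using open_interior x by (rule eventually_nhds_in_open)
    then show ?thesis using x interior_subset by (auto elim!: eventually_mono)
  next
    assume x: "x \<in> interior (- S)"
    have "eventually (\<lambda>y. y \<in> interior (- S)) (nhds x)"
      using open_interior x by (rule eventually_nhds_in_open)
    then show ?thesis using x interior_subset by (auto elim!: eventually_mono)
  qed
qed

lemma hausdorff_dist_nonneg_le:
  assumes "S \<noteq> {}" "T \<noteq> {}" "\<forall>x\<in>S. infdist x T \<le> e" "\<forall>y\<in>T. infdist y S \<le> e"
  shows "0 \<le> hausdorff_dist S T \<and> hausdorff_dist S T \<le> e"
proof -
  have le: "(SUP x\<in>S. infdist x T) \<le> e" "(SUP y\<in>T. infdist y S) \<le> e"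
    using assms by (auto intro!: cSUP_least)
  obtain x where "x \<in> S" using assms(1) by blast
  then have "infdist x T \<le> (SUP x\<in>S. infdist x T)"
    using assms(3) by (auto intro!: cSUP_upper bdd_aboveI2)
  then have "0 \<le> (SUP x\<in>S. infdist x T)" using infdist_nonneg[of x T] by linarith
  with le show ?thesis unfolding hausdorff_dist_def by auto
qed

lemma infdist_le_convex_Sigma:
  fixes C :: "'m::real_vector \<Rightarrow> 'a::real_normed_vector set"
  assumes "convex (SIGMA \<mu>:B. C \<mu>)" "\<mu> \<in> B" "w \<in> B" "x \<in> C \<mu>" "y \<in> C w" "0 \<le> t" "t \<le> 1"
  shows "infdist x (C ((1 - t) *\<^sub>R \<mu> + t *\<^sub>R w)) \<le> t * dist x y"
proof -
  have "(1 - t) *\<^sub>R x + t *\<^sub>R y \<in> C ((1 - t) *\<^sub>R \<mu> + t *\<^sub>R w)"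
    using convexD_alt[OF assms(1), of "(\<mu>, x)" "(w, y)" t] assms(2-) by auto
  then have "infdist x (C ((1 - t) *\<^sub>R \<mu> + t *\<^sub>R w)) \<le> dist x ((1 - t) *\<^sub>R x + t *\<^sub>R y)"
    by (rule infdist_le)
  also have "dist x ((1 - t) *\<^sub>R x + t *\<^sub>R y) = norm (t *\<^sub>R (x - y))"
    unfolding dist_norm by (simp add: algebra_simps)
  also have "\<dots> = t * dist x y"
    using assms(6) by (simp add: dist_norm)
  finally show ?thesis .
qed

text \<open>\<open>\<mu>\<^sub>2\<close> is a convex combination of \<open>\<mu>\<^sub>1\<close> and the point \<open>w\<close> beyond \<open>\<mu>\<^sub>2\<close> at distance \<open>r/2\<close>
  from it, with weight at most \<open>2 dist \<mu>\<^sub>1 \<mu>\<^sub>2 / r\<close> on \<open>w\<close>.\<close>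
lemma infdist_le_convex_Sigma_ball:
  fixes C :: "'m::real_normed_vector \<Rightarrow> 'a::real_normed_vector set"
  assumes r: "r > 0" and conv: "convex (SIGMA \<mu>:ball m0 r. C \<mu>)"
    and ne: "\<forall>\<mu>\<in>ball m0 r. C \<mu> \<noteq> {}" and K: "\<forall>\<mu>\<in>ball m0 r. C \<mu> \<subseteq> K" "bounded K"
    and \<mu>: "\<mu>1 \<in> ball m0 (r/2)" "\<mu>2 \<in> ball m0 (r/2)" and x: "x \<in> C \<mu>1"
  shows "infdist x (C \<mu>2) \<le> 2 * diameter K / r * dist \<mu>1 \<mu>2"
proof (cases "\<mu>1 = \<mu>2")
  case True
  then show ?thesis using x by simp
next
  case False
  define d where "d = dist \<mu>1 \<mu>2"
  have d: "d > 0" using False by (simp add: d_def)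
  define w where "w = \<mu>2 + (r / (2 * d)) *\<^sub>R (\<mu>2 - \<mu>1)"
  define t where "t = 2 * d / (2 * d + r)"
  have "dist \<mu>2 w = r / 2"
    using d r by (simp add: w_def d_def dist_norm norm_minus_commute)
  then have w: "w \<in> ball m0 r"
    using \<mu>(2) dist_triangle[of m0 w \<mu>2] by (simp add: dist_commute)
  have t: "0 \<le> t" "t \<le> 1" "t \<le> 2 * d / r"
    using d r by (auto simp: t_def field_simps)
  have "1 + r / (2 * d) = (2 * d + r) / (2 * d)" using d by (simp add: field_simps)
  then have t_scale: "t * (1 + r / (2 * d)) = 1" using d r by (simp add: t_def)
  have "(1 - t) *\<^sub>R \<mu>1 + t *\<^sub>R w = \<mu>1 + (t * (1 + r / (2 * d))) *\<^sub>R (\<mu>2 - \<mu>1)"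
    unfolding w_def by (simp add: algebra_simps)
  also have "\<dots> = \<mu>2" using t_scale by simp
  finally have \<mu>2_eq: "(1 - t) *\<^sub>R \<mu>1 + t *\<^sub>R w = \<mu>2" .
  obtain y where y: "y \<in> C w" using ne w by blast
  have "\<mu>1 \<in> ball m0 r" using \<mu>(1) r by simp
  then have "infdist x (C \<mu>2) \<le> t * dist x y"
    using infdist_le_convex_Sigma[OF conv _ w x y t(1,2)] \<mu>2_eq by simp
  also have "\<dots> \<le> 2 * d / r * diameter K"
  proof -
    have "x \<in> K" "y \<in> K" using K(1) x y w \<open>\<mu>1 \<in> ball m0 r\<close> by blast+
    then have "dist x y \<le> diameter K" by (rule diameter_bounded_bound[OF K(2)])
    then show ?thesis using t(1,3) d r by (intro mult_mono) auto
  qed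
  finally show ?thesis by (simp add: d_def mult_ac)
qed

lemma tendsto_hausdorff_dist_convex_Sigma:
  fixes C :: "'m::real_normed_vector \<Rightarrow> 'a::real_normed_vector set"
  assumes r: "r > 0" and conv: "convex (SIGMA \<mu>:ball m0 r. C \<mu>)"
    and ne: "\<forall>\<mu>\<in>ball m0 r. C \<mu> \<noteq> {}" and K: "\<forall>\<mu>\<in>ball m0 r. C \<mu> \<subseteq> K" "bounded K"
  shows "((\<lambda>\<mu>. hausdorff_dist (C \<mu>) (C m0)) \<longlongrightarrow> 0) (at m0 within S)"
proof (rule tendsto_sandwich)
  define L where "L = 2 * diameter K / r"
  have m0: "m0 \<in> ball m0 (r/2)" using r by simp
  have bound: "0 \<le> hausdorff_dist (C \<mu>) (C m0) \<and> hausdorff_dist (C \<mu>) (C m0) \<le> L * dist \<mu> m0"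
    if \<mu>: "\<mu> \<in> ball m0 (r/2)" for \<mu>
  proof (rule hausdorff_dist_nonneg_le)
    have "\<mu> \<in> ball m0 r" "m0 \<in> ball m0 r" using \<mu> r by auto
    then show "C \<mu> \<noteq> {}" "C m0 \<noteq> {}" using ne by blast+
    show "\<forall>x\<in>C \<mu>. infdist x (C m0) \<le> L * dist \<mu> m0"
      using infdist_le_convex_Sigma_ball[OF r conv ne K \<mu> m0] by (simp add: L_def)
    show "\<forall>y\<in>C m0. infdist y (C \<mu>) \<le> L * dist \<mu> m0"
      using infdist_le_convex_Sigma_ball[OF r conv ne K m0 \<mu>] by (simp add: L_def dist_commute)
  qed
  have "eventually (\<lambda>\<mu>. \<mu> \<in> ball m0 (r/2)) (at m0 within S)"
    using eventually_at_ball[of "r/2" m0 S] r by (simp add: eventually_conj_iff)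
  then have ev: "eventually (\<lambda>\<mu>. 0 \<le> hausdorff_dist (C \<mu>) (C m0)
      \<and> hausdorff_dist (C \<mu>) (C m0) \<le> L * dist \<mu> m0) (at m0 within S)"
    by (rule eventually_mono) (rule bound)
  then show "eventually (\<lambda>\<mu>. 0 \<le> hausdorff_dist (C \<mu>) (C m0)) (at m0 within S)"
    by (rule eventually_mono) (rule conjunct1)
  from ev show "eventually (\<lambda>\<mu>. hausdorff_dist (C \<mu>) (C m0) \<le> L * dist \<mu> m0) (at m0 within S)"
    by (rule eventually_mono) (rule conjunct2)
  have "((\<lambda>\<mu>. dist \<mu> m0) \<longlongrightarrow> 0) (at m0 within S)"
    using tendsto_ident_at[of m0 S] by (rule tendsto_dist_iff[THEN iffD1])
  then show "((\<lambda>\<mu>. L * dist \<mu> m0) \<longlongrightarrow> 0) (at m0 within S)"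
    by (rule tendsto_mult_right_zero)
qed simp

definition open_cell :: "('l::finite \<Rightarrow> 'a::euclidean_space) \<Rightarrow> real^'l \<Rightarrow> ('l \<Rightarrow> int) \<Rightarrow> 'a set" where
  "open_cell v \<mu> i = {x. \<forall>j. if i j = -1 then v j \<bullet> x < \<mu>$j else \<mu>$j < v j \<bullet> x}"

lemma open_open_cell: "open (open_cell v \<mu> i)"
proof -
  have "open_cell v \<mu> i = (\<Inter>j. {x. if i j = -1 then v j \<bullet> x < \<mu>$j else \<mu>$j < v j \<bullet> x})"
    unfolding open_cell_def by blast
  moreover have "open {x. if i j = -1 then v j \<bullet> x < \<mu>$j else \<mu>$j < v j \<bullet> x}" for j
    by (cases "i j = -1") (simp_all add: open_halfspace_lt open_halfspace_gt)
  ultimately show ?thesis by (simp add: open_INT)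
qed

lemma sigma_eq_if_open_cell:
  assumes "i \<in> labels" "x \<in> open_cell v \<mu> i"
  shows "sigma v \<mu> x = i"
proof
  fix j
  have "i j = -1 \<or> i j = 1" using assms(1) unfolding labels_def by auto
  moreover have "if i j = -1 then v j \<bullet> x < \<mu>$j else \<mu>$j < v j \<bullet> x"
    using assms(2) unfolding open_cell_def by blast
  ultimately show "sigma v \<mu> x j = i j" unfolding sigma_def by auto
qed

lemma sigma_eq_minus_one_iff: "sigma v \<mu> x j = -1 \<longleftrightarrow> v j \<bullet> x \<le> \<mu>$j"
  by (simp add: sigma_def)

lemma sigma_neq_minus_one_iff: "sigma v \<mu> x j \<noteq> -1 \<longleftrightarrow> \<mu>$j < v j \<bullet> x"
  by (auto simp: sigma_def)

lemma open_cell_subset_Aset: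
  assumes "i \<in> labels"
  shows "rel_interior X \<inter> open_cell v \<mu> i \<subseteq> Aset X v \<mu> i"
proof -
  have "rel_interior X \<inter> open_cell v \<mu> i \<subseteq> rel_interior {x\<in>X. sigma v \<mu> x = i}"
    by (rule rel_interior_Int_open_subset[OF open_open_cell])
      (use sigma_eq_if_open_cell[OF assms] in auto)
  then show ?thesis unfolding Aset_def by blast
qed

text \<open>Nonemptiness for all nearby parameters excludes points of \<open>A\<^sub>i\<^sub>,\<^sub>\<mu>\<close> on a boundary
  hyperplane: lowering \<open>\<mu>\<^sub>j\<close> slightly yields a point of the cell strictly below it.\<close>
lemma Aset_subset_open_cell:
  assumes B: "open B" "\<mu> \<in> B" and ne: "\<forall>\<mu>'\<in>B. Aset X v \<mu>' i \<noteq> {}"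
  shows "Aset X v \<mu> i \<subseteq> open_cell v \<mu> i"
proof
  fix x assume "x \<in> Aset X v \<mu> i"
  define S where "S = {x\<in>X. sigma v \<mu> x = i}"
  have xS: "x \<in> rel_interior S" using \<open>x \<in> Aset X v \<mu> i\<close> unfolding Aset_def S_def by blast
  then have x_sigma: "sigma v \<mu> x = i" using rel_interior_subset unfolding S_def by blast
  have "if i j = -1 then v j \<bullet> x < \<mu>$j else \<mu>$j < v j \<bullet> x" for j
  proof (cases "i j = -1")
    case False
    then show ?thesis using sigma_neq_minus_one_iff[of v \<mu> x j] x_sigma by simp
  next
    case True
    have S_le: "\<forall>z\<in>S. v j \<bullet> z \<le> \<mu>$j"
      using True by (simp add: S_def flip: sigma_eq_minus_one_iff)
    obtain \<epsilon> where \<epsilon>: "\<epsilon> > 0" "ball \<mu> \<epsilon> \<subseteq> B" using B open_contains_ball by blast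
    define \<mu>' where "\<mu>' = \<mu> - (\<epsilon>/2) *\<^sub>R axis j 1"
    have "dist \<mu> \<mu>' < \<epsilon>" using \<epsilon>(1) by (simp add: \<mu>'_def dist_norm norm_axis_1)
    then have "\<mu>' \<in> B" using \<epsilon>(2) by auto
    then obtain y where "y \<in> Aset X v \<mu>' i" using ne by blast
    then have "y \<in> X" and y_sigma: "sigma v \<mu>' y = i"
      unfolding Aset_def using rel_interior_subset by blast+
    have y_j: "v j \<bullet> y \<le> \<mu>$j - \<epsilon>/2"
      using sigma_eq_minus_one_iff[of v \<mu>' y j] y_sigma True by (simp add: \<mu>'_def)
    have "sigma v \<mu> y k = i k" for k
    proof (cases "k = j")
      case True
      then show ?thesis using y_j \<epsilon>(1) \<open>i j = -1\<close> by (simp add: sigma_eq_minus_one_iff)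
    next
      case False
      then have "\<mu>'$k = \<mu>$k" by (simp add: \<mu>'_def axis_def)
      then have "sigma v \<mu> y k = sigma v \<mu>' y k" by (simp add: sigma_def)
      then show ?thesis using y_sigma by simp
    qed
    with \<open>y \<in> X\<close> have "y \<in> S" by (simp add: S_def fun_eq_iff)
    then have "v j \<bullet> x < \<mu>$j"
      using rel_interior_inner_less[OF xS S_le] y_j \<epsilon>(1) by simp
    then show ?thesis using True by simp
  qed
  then show "x \<in> open_cell v \<mu> i" unfolding open_cell_def by blast
qed

lemma Aset_eq_open_cell:
  assumes "i \<in> labels" "open B" "\<mu> \<in> B" "\<forall>\<mu>'\<in>B. Aset X v \<mu>' i \<noteq> {}"
  shows "Aset X v \<mu> i = rel_interior X \<inter> open_cell v \<mu> i"
  using Aset_subset_open_cell[OF assms(2-)] open_cell_subset_Aset[OF assms(1)]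
  unfolding Aset_def by blast

lemma convex_open_cell_graph:
  fixes v :: "'l::finite \<Rightarrow> 'a::euclidean_space"
  shows "convex {(\<mu>, x). x \<in> open_cell v \<mu> i}"
proof -
  define w where
    "w j = (if i j = -1 then (- axis j (1::real), v j) else (axis j 1, - v j))" for j
  have "{(\<mu>, x). x \<in> open_cell v \<mu> i} = (\<Inter>j. {p. w j \<bullet> p < 0})"
    by (auto simp: open_cell_def w_def cart_eq_inner_axis inner_commute split: if_splits)
  then show ?thesis by (simp add: convex_INT convex_halfspace_lt)
qed

lemma convex_Sigma_Aset:
  assumes "i \<in> labels" "convex X" "open B" "convex B" "\<forall>\<mu>\<in>B. Aset X v \<mu> i \<noteq> {}"
  shows "convex (SIGMA \<mu>:B. Aset X v \<mu> i)"
proof -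
  have "(SIGMA \<mu>:B. Aset X v \<mu> i) = (B \<times> rel_interior X) \<inter> {(\<mu>, x). x \<in> open_cell v \<mu> i}"
    using Aset_eq_open_cell[OF assms(1,3) _ assms(5)] by auto
  then show ?thesis
    using assms(2,4) by (simp only:) (intro convex_Int convex_Times convex_rel_interior convex_open_cell_graph)
qed

lemma convex_Sigma_cyl:
  fixes \<Lambda> :: "('l::finite \<Rightarrow> int) \<Rightarrow> 'a::euclidean_space \<Rightarrow> 'a"
  assumes lin: "\<forall>i\<in>labels. linear (\<Lambda> i)" and X: "convex X" and B: "open B" "convex B"
  shows "set \<alpha> \<subseteq> labels \<Longrightarrow> \<forall>\<mu>\<in>B. cyl X (\<lambda>i x. \<Lambda> i x + b i) v \<mu> \<alpha> \<noteq> {}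
    \<Longrightarrow> convex (SIGMA \<mu>:B. cyl X (\<lambda>i x. \<Lambda> i x + b i) v \<mu> \<alpha>)"
proof (induction \<alpha>)
  case Nil
  then show ?case using convex_Times[OF B(2) convex_UNIV] by simp
next
  case (Cons a \<beta>)
  let ?\<phi> = "\<lambda>i x. \<Lambda> i x + b i"
  have a: "a \<in> labels" "set \<beta> \<subseteq> labels" using Cons.prems(1) by auto
  have ne: "Aset X v \<mu> a \<noteq> {}" "cyl X ?\<phi> v \<mu> \<beta> \<noteq> {}" if "\<mu> \<in> B" for \<mu>
    using Cons.prems(2) that by auto
  have conv_A: "convex (SIGMA \<mu>:B. Aset X v \<mu> a)"
    using convex_Sigma_Aset[OF a(1) X B] ne by blast
  have conv_cyl: "convex (SIGMA \<mu>:B. cyl X ?\<phi> v \<mu> \<beta>)"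
    using Cons.IH a(2) ne by blast
  have L: "linear (\<Lambda> a)" using lin a(1) by blast
  show ?case
    unfolding convex_alt
  proof (intro ballI allI impI)
    fix p q :: "(real^'l) \<times> 'a" and t :: real
    assume p: "p \<in> (SIGMA \<mu>:B. cyl X ?\<phi> v \<mu> (a # \<beta>))"
      and q: "q \<in> (SIGMA \<mu>:B. cyl X ?\<phi> v \<mu> (a # \<beta>))" and t: "0 \<le> t \<and> t \<le> 1"
    obtain \<mu>1 x1 \<mu>2 x2 where pq: "p = (\<mu>1, x1)" "q = (\<mu>2, x2)" by fastforce
    define \<mu> where "\<mu> = (1 - t) *\<^sub>R \<mu>1 + t *\<^sub>R \<mu>2"
    define x where "x = (1 - t) *\<^sub>R x1 + t *\<^sub>R x2"
    have "(\<mu>, x) \<in> (SIGMA \<mu>:B. Aset X v \<mu> a)"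
      using convexD_alt[OF conv_A, of p q t] p q t by (auto simp: pq \<mu>_def x_def)
    moreover have "\<Lambda> a x = (1 - t) *\<^sub>R \<Lambda> a x1 + t *\<^sub>R \<Lambda> a x2"
      by (simp only: x_def linear_add[OF L] linear_scale[OF L])
    then have "?\<phi> a x = (1 - t) *\<^sub>R ?\<phi> a x1 + t *\<^sub>R ?\<phi> a x2"
      by (simp add: algebra_simps)
    then have "(\<mu>, ?\<phi> a x) \<in> (SIGMA \<mu>:B. cyl X ?\<phi> v \<mu> \<beta>)"
      using convexD_alt[OF conv_cyl, of "(\<mu>1, ?\<phi> a x1)" "(\<mu>2, ?\<phi> a x2)" t] p q t
      by (auto simp: pq \<mu>_def)
    ultimately show "(1 - t) *\<^sub>R p + t *\<^sub>R q \<in> (SIGMA \<mu>:B. cyl X ?\<phi> v \<mu> (a # \<beta>))"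
      by (simp add: pq \<mu>_def x_def)
  qed
qed

lemma cyl_subset: "\<alpha> \<noteq> [] \<Longrightarrow> cyl X \<phi> v \<mu> \<alpha> \<subseteq> X"
  using rel_interior_subset[of X] by (cases \<alpha>) (auto simp: Aset_def)

lemma finite_labels: "finite (labels :: ('l::finite \<Rightarrow> int) set)"
proof (rule finite_subset)
  show "labels \<subseteq> PiE UNIV (\<lambda>_::'l. {-1, 1::int})"
    unfolding labels_def by (auto simp: PiE_def extensional_def)
  show "finite (PiE UNIV (\<lambda>_::'l. {-1, 1::int}))" by (intro finite_PiE) auto
qed

lemma W1_notin_frontier:
  assumes "\<mu> \<in> W1 X \<phi> v" "\<alpha> \<noteq> []" "set \<alpha> \<subseteq> labels"
  shows "\<mu> \<notin> frontier (Zset X \<phi> v \<alpha>)"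
proof -
  have "length \<alpha> \<in> {1..}" using assms(2) by (simp add: Suc_le_eq)
  then show ?thesis using assms(1,3) unfolding W1_def by blast
qed

lemma eventually_admissible_eq:
  fixes \<phi> :: "('l::finite \<Rightarrow> int) \<Rightarrow> 'a::euclidean_space \<Rightarrow> 'a"
  assumes "\<mu>s \<in> W1 X \<phi> v" "n \<ge> 1"
  shows "eventually (\<lambda>\<mu>. admissible X \<phi> v \<mu> n = admissible X \<phi> v \<mu>s n) (nhds \<mu>s)"
proof -
  define W where "W = {\<alpha> :: ('l \<Rightarrow> int) list. set \<alpha> \<subseteq> labels \<and> length \<alpha> = n}"
  have "finite W" unfolding W_def by (rule finite_lists_length_eq[OF finite_labels])
  moreover have "eventually (\<lambda>\<mu>. \<mu> \<in> Zset X \<phi> v \<alpha> \<longleftrightarrow> \<mu>s \<in> Zset X \<phi> v \<alpha>) (nhds \<mu>s)"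
    if "\<alpha> \<in> W" for \<alpha>
    using that assms by (intro eventually_mem_iff_notin_frontier W1_notin_frontier) (auto simp: W_def)
  ultimately have "eventually (\<lambda>\<mu>. \<forall>\<alpha>\<in>W. \<mu> \<in> Zset X \<phi> v \<alpha> \<longleftrightarrow> \<mu>s \<in> Zset X \<phi> v \<alpha>) (nhds \<mu>s)"
    by (intro eventually_ball_finite) auto
  then show ?thesis
    by (rule eventually_mono) (auto simp: admissible_def Zset_def W_def)
qed

lemma mem_interior_Zset_if_admissible:
  assumes "\<mu>s \<in> W1 X \<phi> v" "n \<ge> 1" "\<alpha> \<in> admissible X \<phi> v \<mu>s n"
  shows "\<mu>s \<in> interior (Zset X \<phi> v \<alpha>)"
proof -
  have \<alpha>: "\<alpha> \<noteq> []" "set \<alpha> \<subseteq> labels" "\<mu>s \<in> Zset X \<phi> v \<alpha>"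
    using assms(2,3) by (auto simp: admissible_def Zset_def)
  moreover have "\<mu>s \<notin> frontier (Zset X \<phi> v \<alpha>)" using W1_notin_frontier[OF assms(1) \<alpha>(1,2)] .
  ultimately show ?thesis
    using closure_subset[of "Zset X \<phi> v \<alpha>"] unfolding frontier_def by blast
qed

lemma tendsto_hausdorff_dist_cyl:
  fixes \<Lambda> :: "('l::finite \<Rightarrow> int) \<Rightarrow> 'a::euclidean_space \<Rightarrow> 'a"
  assumes X: "convex X" "bounded X" and lin: "\<forall>i\<in>labels. linear (\<Lambda> i)"
    and \<alpha>: "\<alpha> \<noteq> []" "set \<alpha> \<subseteq> labels"
    and \<mu>s: "\<mu>s \<in> interior (Zset X (\<lambda>i x. \<Lambda> i x + b i) v \<alpha>)"
  shows "((\<lambda>\<mu>. hausdorff_dist (cyl X (\<lambda>i x. \<Lambda> i x + b i) v \<mu> \<alpha>)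
                          (cyl X (\<lambda>i x. \<Lambda> i x + b i) v \<mu>s \<alpha>)) \<longlongrightarrow> 0) (at \<mu>s within S)"
proof -
  obtain r where r: "r > 0" "ball \<mu>s r \<subseteq> Zset X (\<lambda>i x. \<Lambda> i x + b i) v \<alpha>"
    using \<mu>s unfolding mem_interior by blast
  then have ne: "\<forall>\<mu>\<in>ball \<mu>s r. cyl X (\<lambda>i x. \<Lambda> i x + b i) v \<mu> \<alpha> \<noteq> {}"
    by (auto simp: Zset_def)
  have "convex (SIGMA \<mu>:ball \<mu>s r. cyl X (\<lambda>i x. \<Lambda> i x + b i) v \<mu> \<alpha>)"
    by (rule convex_Sigma_cyl[OF lin X(1) open_ball convex_ball \<alpha>(2) ne])
  moreover have "\<forall>\<mu>\<in>ball \<mu>s r. cyl X (\<lambda>i x. \<Lambda> i x + b i) v \<mu> \<alpha> \<subseteq> X"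
    using cyl_subset[OF \<alpha>(1)] by blast
  ultimately show ?thesis using tendsto_hausdorff_dist_convex_Sigma[OF r(1) _ ne _ X(2)] by blast
qed

theorem lemma5p5:
  fixes X :: "'a::euclidean_space set"
    and \<Lambda> :: "('l::finite \<Rightarrow> int) \<Rightarrow> 'a \<Rightarrow> 'a"
    and b :: "('l \<Rightarrow> int) \<Rightarrow> 'a"
    and v :: "'l \<Rightarrow> 'a"
    and \<mu>s :: "real^'l"
  assumes X_polytope: "polytope X"
    and Lambda_lin: "\<forall>i\<in>labels. linear (\<Lambda> i) \<and> bij (\<Lambda> i)"
    and Lambda_contr: "\<exists>N. is_norm N \<and> (\<forall>i\<in>labels. op_norm_wrt N (\<Lambda> i) < 1)"
    and phi_into: "\<forall>i\<in>labels. (\<lambda>x. \<Lambda> i x + b i) ` X \<subseteq> rel_interior X"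
    and v_unit: "\<forall>j. norm (v j) = 1"
    and mu_W1: "\<mu>s \<in> W1 X (\<lambda>i x. \<Lambda> i x + b i) v"
  shows "\<forall>n\<ge>1. \<exists>\<delta>>0.
           (\<forall>\<mu>\<in>ball \<mu>s 1 \<inter> ball \<mu>s \<delta>.
              admissible X (\<lambda>i x. \<Lambda> i x + b i) v \<mu> n = admissible X (\<lambda>i x. \<Lambda> i x + b i) v \<mu>s n)
         \<and> (\<forall>\<alpha>\<in>admissible X (\<lambda>i x. \<Lambda> i x + b i) v \<mu>s n.
              ((\<lambda>\<mu>. hausdorff_dist (cyl X (\<lambda>i x. \<Lambda> i x + b i) v \<mu> \<alpha>)
                                   (cyl X (\<lambda>i x. \<Lambda> i x + b i) v \<mu>s \<alpha>)) \<longlongrightarrow> 0)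
                (at \<mu>s within ball \<mu>s 1))"
proof -
  let ?\<phi> = "\<lambda>i x. \<Lambda> i x + b i"
  have lin: "\<forall>i\<in>labels. linear (\<Lambda> i)" using Lambda_lin by blast
  have X: "convex X" "bounded X"
    using X_polytope by (simp_all add: polytope_imp_convex polytope_imp_bounded)
  have admissible_eq: "\<exists>\<delta>>0. \<forall>\<mu>\<in>ball \<mu>s 1 \<inter> ball \<mu>s \<delta>. admissible X ?\<phi> v \<mu> n = admissible X ?\<phi> v \<mu>s n"
    if n: "n \<ge> 1" for n
  proof -
    obtain \<delta> where \<delta>: "\<delta> > 0"
      "\<forall>\<mu>. dist \<mu> \<mu>s < \<delta> \<longrightarrow> admissible X ?\<phi> v \<mu> n = admissible X ?\<phi> v \<mu>s n"
      using eventually_admissible_eq[OF mu_W1 n] unfolding eventually_nhds_metric by blast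
    have "admissible X ?\<phi> v \<mu> n = admissible X ?\<phi> v \<mu>s n"
      if "\<mu> \<in> ball \<mu>s 1 \<inter> ball \<mu>s \<delta>" for \<mu>
      using \<delta>(2) that by (simp add: dist_commute)
    with \<delta>(1) show ?thesis by blast
  qed
  have hausdorff: "((\<lambda>\<mu>. hausdorff_dist (cyl X ?\<phi> v \<mu> \<alpha>) (cyl X ?\<phi> v \<mu>s \<alpha>)) \<longlongrightarrow> 0)
      (at \<mu>s within ball \<mu>s 1)" if "n \<ge> 1" "\<alpha> \<in> admissible X ?\<phi> v \<mu>s n" for n \<alpha>
  proof -
    have "\<alpha> \<noteq> []" "set \<alpha> \<subseteq> labels" using that by (auto simp: admissible_def)
    then show ?thesis
      using tendsto_hausdorff_dist_cyl[OF X lin _ _ mem_interior_Zset_if_admissible[OF mu_W1 that]]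
      by blast
  qed
  show ?thesis using admissible_eq hausdorff by meson
qed

end
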